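(* For all integers $r\ge 2$ and $n\ge r$, $$\mathrm{exa}_1(n,K_r)=\binom{r}{2}+(r-2)(n-r)+\mathrm{ex}(n-r,K_r).$$
   Context: For a graph $H$ and a graph $F$, $\mathcal N(H,F)$ denotes the number of subgraphs of $H$ isomorphic to $F$. For a nonnegative integer $k$, $\mathrm{exa}_k(n,F)$ is the largest number of edges of a simple graph $H$ on $n$ vertices with $\mathcal N(H,F)=k$. $\mathrm{ex}(m,F)$ is the Turán number: the largest number of edges of a simple graph on $m$ vertices containing no subgraph isomorphic to $F$ (with $\mathrm{ex}(0,F)=0$). $K_r$ is the complete graph on $r$ vertices. *)

theory Defs
  imports Main
begin

definition simple_graph :: "'a set \<Rightarrow> 'a set set \<Rightarrow> bool" where
  "simple_graph V E \<longleftrightarrow> finite V \<and> (\<forall>e\<in>E. card e = 2 \<and> e \<subseteq> V)"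

definition num_sub :: "'a set \<Rightarrow> 'a set set \<Rightarrow> 'b set \<Rightarrow> 'b set set \<Rightarrow> nat" where
  "num_sub V E VF EF = card {(V', E'). V' \<subseteq> V \<and> E' \<subseteq> E \<and>
       (\<exists>f. bij_betw f VF V' \<and> (\<lambda>e. f ` e) ` EF = E')}"

definition K_verts :: "nat \<Rightarrow> nat set" where
  "K_verts r = {0..<r}"

definition K_edges :: "nat \<Rightarrow> nat set set" where
  "K_edges r = {e. e \<subseteq> {0..<r} \<and> card e = 2}"

definition exa :: "nat \<Rightarrow> nat \<Rightarrow> 'b set \<Rightarrow> 'b set set \<Rightarrow> nat" where
  "exa k n VF EF = Max {card E | E. simple_graph {0..<n} E \<and> num_sub {0..<n} E VF EF = k}"

definition ex :: "nat \<Rightarrow> 'b set \<Rightarrow> 'b set set \<Rightarrow> nat" where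
  "ex m VF EF = Max {card E | E. simple_graph {0..<m} E \<and> num_sub {0..<m} E VF EF = 0}"

end

theory Submission
  imports Defs
begin

text \<open>
  Upper bound: let \<open>S\<close> be the unique copy of \<open>K\<^sub>r\<close>. A vertex outside \<open>S\<close> has at most
  \<open>r - 2\<close> neighbours in \<open>S\<close>, since with \<open>r - 1\<close> of them it would span a second copy,
  and the graph induced on the other \<open>n - r\<close> vertices is \<open>K\<^sub>r\<close>-free. Counting the edges
  inside \<open>S\<close>, between \<open>S\<close> and the rest, and inside the rest gives the bound.

  Lower bound: by Turan's theorem in Erdos's form, a \<open>K\<^sub>r\<close>-free graph has at most as many
  edges as some complete \<open>(r - 1)\<close>-partite graph on the same vertices. Take such a graph
  on \<open>n - r\<close> vertices, with parts \<open>0, \<dots>, r - 2\<close> and at least \<open>ex(n - r, K\<^sub>r)\<close> edges;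
  add a \<open>K\<^sub>r\<close> on new vertices \<open>s 0, \<dots>, s (r - 1)\<close> and join each vertex of part \<open>i\<close>
  to every \<open>s j\<close> with \<open>j \<noteq> i\<close> and \<open>j < r - 1\<close>. Colouring part \<open>i\<close> and \<open>s i\<close> with
  \<open>i\<close> is proper, and colour \<open>r - 1\<close> occurs only at \<open>s (r - 1)\<close>, which has no old
  neighbour; so a clique through an old vertex has fewer than \<open>r\<close> vertices.
\<close>

section \<open>Cliques and copies of \<open>K\<^sub>r\<close>\<close>

definition clique :: "'a set set \<Rightarrow> 'a set \<Rightarrow> bool" where
  "clique E C \<longleftrightarrow> (\<forall>x\<in>C. \<forall>y\<in>C. x \<noteq> y \<longrightarrow> {x, y} \<in> E)"

definition cliques :: "'a set \<Rightarrow> 'a set set \<Rightarrow> nat \<Rightarrow> 'a set set" where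
  "cliques V E r = {C. C \<subseteq> V \<and> card C = r \<and> clique E C}"

definition complete_edges :: "'a set \<Rightarrow> 'a set set" where
  "complete_edges A = {e. e \<subseteq> A \<and> card e = 2}"

definition neighbours :: "'a set \<Rightarrow> 'a set set \<Rightarrow> 'a \<Rightarrow> 'a set" where
  "neighbours A E x = {y \<in> A. {x, y} \<in> E}"

lemma clique_iff_complete_edges_subset: "clique E C \<longleftrightarrow> complete_edges C \<subseteq> E"
proof
  assume "clique E C"
  then show "complete_edges C \<subseteq> E"
    unfolding clique_def complete_edges_def by (auto simp: card_2_iff)
next
  assume "complete_edges C \<subseteq> E"
  moreover have "{x, y} \<in> complete_edges C" if "x \<in> C" "y \<in> C" "x \<noteq> y" for x y
    using that by (simp add: complete_edges_def)
  ultimately show "clique E C"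
    unfolding clique_def by blast
qed

lemma clique_singleton: "clique E {x}"
  by (simp add: clique_def)

lemma clique_subset: "clique E C \<Longrightarrow> D \<subseteq> C \<Longrightarrow> clique E D"
  unfolding clique_def by blast

lemma clique_edge: "clique E C \<Longrightarrow> x \<in> C \<Longrightarrow> y \<in> C \<Longrightarrow> x \<noteq> y \<Longrightarrow> {x, y} \<in> E"
  unfolding clique_def by blast

lemma clique_empty_iff: "finite C \<Longrightarrow> clique {} C \<longleftrightarrow> card C \<le> 1"
  unfolding clique_def by (auto simp: card_le_Suc0_iff_eq)

lemma neighbours_subset: "neighbours A E x \<subseteq> A"
  unfolding neighbours_def by blast

lemma clique_insert_neighbours:
  assumes "C \<subseteq> neighbours A E v" and "clique E C"
  shows "clique E (insert v C)"
proof -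
  have "{v, y} \<in> E" "{y, v} \<in> E" if "y \<in> C" for y
    using assms(1) that unfolding neighbours_def by (auto simp: insert_commute)
  with assms(2) show ?thesis
    unfolding clique_def by blast
qed

lemma finite_cliques: "finite V \<Longrightarrow> finite (cliques V E r)"
  by (rule finite_subset[of _ "Pow V"]) (auto simp: cliques_def)

lemma card_clique_less:
  assumes "cliques V E r = {}" and "C \<subseteq> V" and "clique E C"
  shows "card C < r"
proof (rule ccontr)
  assume "\<not> card C < r"
  then obtain D where "D \<subseteq> C" and "card D = r"
    by (meson not_less obtain_subset_with_card_n)
  with assms have "D \<in> cliques V E r"
    unfolding cliques_def clique_def by blast
  with assms(1) show False by blast
qed

lemma finite_edges:
  assumes "\<forall>e\<in>E. e \<subseteq> V" and "finite V"
  shows "finite E"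
proof (rule finite_subset)
  show "E \<subseteq> Pow V" using assms(1) by blast
qed (simp add: assms(2))

lemma finite_complete_edges: "finite A \<Longrightarrow> finite (complete_edges A)"
  by (rule finite_subset[of _ "Pow A"]) (auto simp: complete_edges_def)

lemma card_complete_edges: "finite A \<Longrightarrow> card (complete_edges A) = card A choose 2"
  using n_subsets by (simp add: complete_edges_def)

lemma card_edges_inside_le:
  assumes "\<forall>e\<in>E. card e = 2" and "finite S"
  shows "card {e \<in> E. e \<subseteq> S} \<le> card S choose 2"
proof -
  have "{e \<in> E. e \<subseteq> S} \<subseteq> complete_edges S"
    using assms(1) unfolding complete_edges_def by blast
  then have "card {e \<in> E. e \<subseteq> S} \<le> card (complete_edges S)"
    by (intro card_mono finite_complete_edges assms(2))
  then show ?thesis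
    using card_complete_edges[OF assms(2)] by simp
qed

lemma image_complete_edges:
  assumes "inj_on f A"
  shows "(`) f ` complete_edges A = complete_edges (f ` A)"
proof
  show "(`) f ` complete_edges A \<subseteq> complete_edges (f ` A)"
    using assms by (auto simp: complete_edges_def card_image inj_on_subset)
next
  show "complete_edges (f ` A) \<subseteq> (`) f ` complete_edges A"
  proof
    fix e assume "e \<in> complete_edges (f ` A)"
    then obtain d where "d \<subseteq> A" and "e = f ` d" and "card e = 2"
      by (auto simp: complete_edges_def subset_image_iff)
    moreover have "inj_on f d"
      using assms \<open>d \<subseteq> A\<close> by (rule inj_on_subset)
    ultimately have "d \<in> complete_edges A"
      by (simp add: complete_edges_def card_image)
    with \<open>e = f ` d\<close> show "e \<in> (`) f ` complete_edges A"
      by blast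
  qed
qed

lemma num_sub_complete_graph:
  assumes "finite V"
  shows "num_sub V E (K_verts r) (K_edges r) = card (cliques V E r)"
proof -
  have copy_iff: "(\<exists>f. bij_betw f (K_verts r) C \<and> (`) f ` K_edges r = F)
      \<longleftrightarrow> card C = r \<and> F = complete_edges C" if C_sub: "C \<subseteq> V" for C F
  proof
    assume "\<exists>f. bij_betw f (K_verts r) C \<and> (`) f ` K_edges r = F"
    then obtain f where "bij_betw f {0..<r} C" and "(`) f ` K_edges r = F"
      by (auto simp: K_verts_def)
    then show "card C = r \<and> F = complete_edges C"
      using image_complete_edges[of f "{0..<r}"]
      by (auto simp: bij_betw_def K_edges_def complete_edges_def card_image)
  next
    assume "card C = r \<and> F = complete_edges C"
    moreover obtain f where "bij_betw f {0..<card C} C"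
      using ex_bij_betw_nat_finite finite_subset[OF C_sub assms] by blast
    ultimately show "\<exists>f. bij_betw f (K_verts r) C \<and> (`) f ` K_edges r = F"
      using image_complete_edges[of f "{0..<r}"]
      by (auto simp: bij_betw_def K_verts_def K_edges_def complete_edges_def)
  qed
  have "{(C, F). C \<subseteq> V \<and> F \<subseteq> E \<and> (\<exists>f. bij_betw f (K_verts r) C \<and> (`) f ` K_edges r = F)}
      = {(C, F). C \<subseteq> V \<and> F \<subseteq> E \<and> card C = r \<and> F = complete_edges C}"
    (is "?copies = _")
    using copy_iff by (simp cong: conj_cong)
  also have "\<dots> = (\<lambda>C. (C, complete_edges C)) ` cliques V E r"
    by (auto simp: cliques_def clique_iff_complete_edges_subset)
  finally have "?copies = (\<lambda>C. (C, complete_edges C)) ` cliques V E r" .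
  moreover have "inj_on (\<lambda>C. (C, complete_edges C)) (cliques V E r)"
    by (auto intro: inj_onI)
  ultimately show ?thesis
    unfolding num_sub_def by (simp add: card_image)
qed

lemma finite_card_graphs: "finite {card E | E. simple_graph {0..<m::nat} E \<and> P E}"
proof (rule finite_subset)
  show "{card E | E. simple_graph {0..<m} E \<and> P E} \<subseteq> card ` Pow (Pow {0..<m})"
    by (auto simp: simple_graph_def)
qed simp

lemma ex_complete_graph:
  "ex m (K_verts r) (K_edges r)
     = Max {card E | E. simple_graph {0..<m} E \<and> cliques {0..<m} E r = {}}"
  unfolding ex_def by (simp add: num_sub_complete_graph finite_cliques)

lemma exa_complete_graph:
  "exa k n (K_verts r) (K_edges r)
     = Max {card E | E. simple_graph {0..<n} E \<and> card (cliques {0..<n} E r) = k}"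
  unfolding exa_def by (simp add: num_sub_complete_graph)

lemma clique_image_iff:
  assumes "inj_on g W" and "\<forall>e\<in>G. e \<subseteq> W" and "D \<subseteq> W"
  shows "clique ((`) g ` G) (g ` D) \<longleftrightarrow> clique G D"
proof -
  have edge_iff: "{g x, g y} \<in> (`) g ` G \<longleftrightarrow> {x, y} \<in> G" if "x \<in> D" and "y \<in> D" for x y
  proof -
    have "g ` {x, y} = g ` e \<longleftrightarrow> {x, y} = e" if "e \<in> G" for e
      using assms(2,3) that \<open>x \<in> D\<close> \<open>y \<in> D\<close>
      by (intro inj_on_image_eq_iff[OF assms(1)]) auto
    moreover have "{g x, g y} = g ` {x, y}" by simp
    ultimately show ?thesis
      unfolding image_iff by blast
  qed
  have neq_iff: "g x \<noteq> g y \<longleftrightarrow> x \<noteq> y" if "x \<in> D" and "y \<in> D" for x y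
    using that assms(3) by (simp add: inj_on_eq_iff[OF assms(1)] subsetD)
  show ?thesis
    unfolding clique_def by (simp add: edge_iff neq_iff)
qed

lemma cliques_image:
  assumes "inj_on g W" and "\<forall>e\<in>G. e \<subseteq> W"
  shows "cliques (g ` W) ((`) g ` G) r = (`) g ` cliques W G r"
proof (intro equalityI subsetI)
  fix C assume "C \<in> cliques (g ` W) ((`) g ` G) r"
  then have C: "C \<subseteq> g ` W" "card C = r" "clique ((`) g ` G) C"
    unfolding cliques_def by blast+
  then obtain D where "D \<subseteq> W" and "C = g ` D"
    by (auto simp: subset_image_iff)
  moreover have "inj_on g D"
    using assms(1) \<open>D \<subseteq> W\<close> by (rule inj_on_subset)
  ultimately have "D \<in> cliques W G r"
    using C clique_image_iff[OF assms] unfolding cliques_def by (simp add: card_image)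
  with \<open>C = g ` D\<close> show "C \<in> (`) g ` cliques W G r"
    by blast
next
  fix C assume "C \<in> (`) g ` cliques W G r"
  then obtain D where "D \<subseteq> W" "card D = r" "clique G D" "C = g ` D"
    unfolding cliques_def by blast
  moreover have "inj_on g D"
    using assms(1) \<open>D \<subseteq> W\<close> by (rule inj_on_subset)
  ultimately show "C \<in> cliques (g ` W) ((`) g ` G) r"
    using clique_image_iff[OF assms] unfolding cliques_def by (auto simp: card_image)
qed

lemma card_le_ex:
  assumes "finite W" and edges: "\<forall>e\<in>G. card e = 2 \<and> e \<subseteq> W" and "cliques W G r = {}"
  shows "card G \<le> ex (card W) (K_verts r) (K_edges r)"
proof -
  obtain g where "bij_betw g W {0..<card W}"
    using ex_bij_betw_finite_nat[OF assms(1)] by blast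
  then have inj: "inj_on g W" and img: "g ` W = {0..<card W}"
    by (auto simp: bij_betw_def)
  define G' where "G' = (`) g ` G"
  have "inj_on ((`) g) G"
    using edges by (intro inj_on_subset[OF inj_on_image_Pow[OF inj]]) blast
  then have "card G' = card G"
    unfolding G'_def by (rule card_image)
  moreover have "simple_graph {0..<card W} G'"
    unfolding simple_graph_def
  proof (intro conjI ballI)
    fix e' assume "e' \<in> G'"
    then obtain e where "e \<in> G" and "e' = g ` e"
      unfolding G'_def by blast
    moreover have "inj_on g e"
      using inj edges \<open>e \<in> G\<close> inj_on_subset by blast
    ultimately show "card e' = 2" and "e' \<subseteq> {0..<card W}"
      using edges img by (auto simp: card_image)
  qed simp
  moreover have "\<forall>e\<in>G. e \<subseteq> W"
    using edges by blast
  then have "cliques {0..<card W} G' r = {}"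
    using cliques_image[OF inj, of G r] assms(3) img unfolding G'_def by simp
  ultimately have "card G \<in> {card E | E. simple_graph {0..<card W} E \<and> cliques {0..<card W} E r = {}}"
    by (intro CollectI exI[of _ G'] conjI) simp_all
  then show ?thesis
    unfolding ex_complete_graph by (rule Max_ge[OF finite_card_graphs])
qed

lemma ex_attained:
  assumes "2 \<le> r"
  obtains G where "simple_graph {0..<m} G" and "cliques {0..<m} G r = {}"
    and "card G = ex m (K_verts r) (K_edges r)"
proof -
  let ?S = "{card E | E. simple_graph {0..<m} E \<and> cliques {0..<m} E r = {}}"
  have "\<not> clique {} C" if "C \<subseteq> {0..<m}" and "card C = r" for C
    using that assms finite_subset[OF that(1)] by (simp add: clique_empty_iff)
  then have "cliques {0..<m} {} r = {}"
    unfolding cliques_def by blast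
  then have "card {} \<in> ?S"
    by (intro CollectI exI[of _ "{}"] conjI) (simp_all add: simple_graph_def)
  then have "?S \<noteq> {}" by blast
  then have "Max ?S \<in> ?S"
    by (rule Max_in[OF finite_card_graphs])
  then obtain G where "card G = Max ?S" and "simple_graph {0..<m} G" and "cliques {0..<m} G r = {}"
    by auto
  then show ?thesis
    using that[of G] unfolding ex_complete_graph by simp
qed


section \<open>Turan's theorem\<close>

lemma card_edges_at_le_card_neighbours:
  assumes "\<forall>e\<in>E. card e = 2" and "finite A"
  shows "card {e \<in> E. x \<in> e \<and> e \<subseteq> insert x A} \<le> card (neighbours A E x)"
proof -
  have fin: "finite (neighbours A E x)"
    by (rule finite_subset[OF neighbours_subset assms(2)])
  have "{e \<in> E. x \<in> e \<and> e \<subseteq> insert x A} \<subseteq> (\<lambda>y. {x, y}) ` neighbours A E x"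
  proof (intro subsetI, elim CollectE conjE)
    fix e assume e: "e \<in> E" "x \<in> e" "e \<subseteq> insert x A"
    then obtain a b where ab: "e = {a, b}" "a \<noteq> b"
      using assms(1) by (auto simp: card_2_iff)
    define y where "y = (if a = x then b else a)"
    have "e = {x, y}" and "y \<noteq> x"
      using e(2) ab unfolding y_def by auto
    with e show "e \<in> (\<lambda>y. {x, y}) ` neighbours A E x"
      unfolding neighbours_def by blast
  qed
  then have "card {e \<in> E. x \<in> e \<and> e \<subseteq> insert x A} \<le> card ((\<lambda>y. {x, y}) ` neighbours A E x)"
    by (intro card_mono finite_imageI fin)
  also have "\<dots> \<le> card (neighbours A E x)"
    by (rule card_image_le[OF fin])
  finally show ?thesis .
qed

lemma card_edges_le_card_inside_plus_degrees:
  assumes edges: "\<forall>e\<in>E. card e = 2 \<and> e \<subseteq> V" and "finite V"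
    and deg: "\<forall>y\<in>V - A. card (neighbours V E y) \<le> d"
  shows "card E \<le> card {e \<in> E. e \<subseteq> A} + d * card (V - A)"
proof -
  define U where "U = (\<Union>y\<in>V - A. {e \<in> E. y \<in> e \<and> e \<subseteq> insert y V})"
  have "finite E"
    using edges \<open>finite V\<close> by (intro finite_edges) auto
  moreover have "E \<subseteq> {e \<in> E. e \<subseteq> A} \<union> U"
    using edges unfolding U_def by blast
  moreover have "{e \<in> E. e \<subseteq> A} \<union> U \<subseteq> E"
    unfolding U_def by blast
  ultimately have "card E \<le> card ({e \<in> E. e \<subseteq> A} \<union> U)"
    by (metis card_mono finite_subset)
  also have "\<dots> \<le> card {e \<in> E. e \<subseteq> A} + card U"
    by (rule card_Un_le)
  also have "card U \<le> (\<Sum>y\<in>V - A. card {e \<in> E. y \<in> e \<and> e \<subseteq> insert y V})"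
    unfolding U_def using \<open>finite V\<close> by (intro card_UN_le) simp
  also have "\<dots> \<le> (\<Sum>y\<in>V - A. d)"
  proof (rule sum_mono)
    fix y assume "y \<in> V - A"
    have "card {e \<in> E. y \<in> e \<and> e \<subseteq> insert y V} \<le> card (neighbours V E y)"
      using edges \<open>finite V\<close> by (intro card_edges_at_le_card_neighbours) auto
    also have "\<dots> \<le> d"
      using deg \<open>y \<in> V - A\<close> by blast
    finally show "card {e \<in> E. y \<in> e \<and> e \<subseteq> insert y V} \<le> d" .
  qed
  finally show ?thesis
    by (simp add: mult.commute)
qed

definition multipartite_edges :: "'a set \<Rightarrow> ('a \<Rightarrow> nat) \<Rightarrow> 'a set set" where
  "multipartite_edges V col = {{x, y} | x y. x \<in> V \<and> y \<in> V \<and> col x \<noteq> col y}"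

lemma multipartite_edges_subset_Pow: "multipartite_edges V col \<subseteq> Pow V"
  unfolding multipartite_edges_def by auto

lemma finite_multipartite_edges: "finite V \<Longrightarrow> finite (multipartite_edges V col)"
  using multipartite_edges_subset_Pow finite_subset by (metis finite_Pow_iff)

lemma card_multipartite_edges_add_class:
  assumes "finite V" and "A \<subseteq> V" and "\<forall>x\<in>A. col x \<noteq> c"
  shows "card (multipartite_edges A col) + card A * card (V - A)
           \<le> card (multipartite_edges V (\<lambda>x. if x \<in> A then col x else c))"
proof -
  define X where "X = (\<lambda>(x, y). {x, y}) ` (A \<times> (V - A))"
  have "inj_on (\<lambda>(x, y). {x, y}) (A \<times> (V - A))"
    by (auto simp: inj_on_def doubleton_eq_iff)
  then have "card X = card A * card (V - A)"
    unfolding X_def by (simp add: card_image card_cartesian_product)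
  moreover have "multipartite_edges A col \<inter> X = {}"
    using multipartite_edges_subset_Pow unfolding X_def by blast
  moreover have "finite (multipartite_edges A col)" and "finite X"
    using assms finite_subset finite_multipartite_edges unfolding X_def by blast+
  ultimately have "card (multipartite_edges A col) + card A * card (V - A)
      = card (multipartite_edges A col \<union> X)"
    by (simp add: card_Un_disjoint)
  also have "\<dots> \<le> card (multipartite_edges V (\<lambda>x. if x \<in> A then col x else c))"
  proof (rule card_mono)
    show "finite (multipartite_edges V (\<lambda>x. if x \<in> A then col x else c))"
      using assms(1) by (rule finite_multipartite_edges)
    show "multipartite_edges A col \<union> X \<subseteq> multipartite_edges V (\<lambda>x. if x \<in> A then col x else c)"
      using assms(2,3) unfolding multipartite_edges_def X_def by fastforce
  qed
  finally show ?thesis .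
qed

lemma self_notin_neighbours:
  assumes "\<forall>e\<in>E. card e = 2"
  shows "x \<notin> neighbours A E x"
proof
  assume "x \<in> neighbours A E x"
  then have "{x} \<in> E"
    by (simp add: neighbours_def)
  with assms show False by fastforce
qed

lemma ex_max_degree:
  assumes "finite V" and "V \<noteq> {}"
  obtains v where "v \<in> V" and "\<forall>u\<in>V. card (neighbours V E u) \<le> card (neighbours V E v)"
proof -
  obtain u where "u \<in> V"
    using assms(2) by blast
  moreover have "\<forall>u. u \<in> V \<longrightarrow> card (neighbours V E u) < Suc (card V)"
    using card_mono[OF assms(1) neighbours_subset] by (simp add: le_imp_less_Suc)
  ultimately have "\<exists>v. v \<in> V \<and> (\<forall>u. u \<in> V \<longrightarrow> card (neighbours V E u) \<le> card (neighbours V E v))"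
    by (rule ex_has_greatest_nat)
  then show ?thesis
    using that by blast
qed

lemma clique_bounded_neighbours:
  assumes "\<forall>e\<in>E. card e = 2" and "finite V" and "v \<in> V"
    and "\<forall>C\<subseteq>V. clique E C \<longrightarrow> card C \<le> Suc k"
  shows "\<forall>C\<subseteq>neighbours V E v. clique {e \<in> E. e \<subseteq> neighbours V E v} C \<longrightarrow> card C \<le> k"
proof (intro allI impI)
  fix C assume C: "C \<subseteq> neighbours V E v" "clique {e \<in> E. e \<subseteq> neighbours V E v} C"
  then have "clique E (insert v C)"
    by (intro clique_insert_neighbours[of _ V]) (auto simp: clique_def)
  moreover have "insert v C \<subseteq> V"
    using assms(3) C(1) neighbours_subset[of V E v] by blast
  ultimately have "card (insert v C) \<le> Suc k"
    using assms(4) by blast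
  moreover have "finite C"
    using C(1) finite_subset[OF neighbours_subset assms(2)] by (rule finite_subset)
  moreover have "v \<notin> C"
    using C(1) self_notin_neighbours[OF assms(1), of v V] by blast
  ultimately show "card C \<le> k" by simp
qed

text \<open>Erdos's proof: let \<open>N\<close> be the neighbourhood of a vertex \<open>v\<close> of maximum degree.
  Cliques in \<open>N\<close> extend by \<open>v\<close>, so the graph on \<open>N\<close> is handled by induction. Every
  vertex outside \<open>N\<close> has degree at most \<open>|N|\<close>, so at most \<open>|N| |V - N|\<close> edges meet
  \<open>V - N\<close>: exactly the number of edges gained by making \<open>V - N\<close> a new colour class.\<close>

lemma card_le_multipartite_edges_if_clique_bounded:
  assumes "finite V" and "\<forall>e\<in>E. card e = 2 \<and> e \<subseteq> V"
    and "\<forall>C\<subseteq>V. clique E C \<longrightarrow> card C \<le> k"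
  shows "\<exists>col. (\<forall>x\<in>V. col x < k) \<and> card E \<le> card (multipartite_edges V col)"
  using assms
proof (induction k arbitrary: V E)
  case 0
  have "card {x} \<le> 0" if "x \<in> V" for x
    using "0.prems"(3) that clique_singleton[of E x] by simp
  then have "V = {}" by fastforce
  moreover from this "0.prems"(2) have "E = {}" by force
  ultimately show ?case by simp
next
  case (Suc k)
  show ?case
  proof (cases "V = {}")
    case True
    moreover from this Suc.prems(2) have "E = {}" by force
    ultimately show ?thesis by simp
  next
    case False
    then obtain v where "v \<in> V"
      and v_max: "\<forall>u\<in>V. card (neighbours V E u) \<le> card (neighbours V E v)"
      using ex_max_degree[OF Suc.prems(1)] by blast
    define N where "N = neighbours V E v"
    have "N \<subseteq> V"
      unfolding N_def by (rule neighbours_subset)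
    then have "finite N"
      using Suc.prems(1) by (rule finite_subset)
    moreover have "\<forall>C\<subseteq>N. clique {e \<in> E. e \<subseteq> N} C \<longrightarrow> card C \<le> k"
      using Suc.prems \<open>v \<in> V\<close> unfolding N_def by (intro clique_bounded_neighbours) auto
    ultimately obtain col' where col': "\<forall>x\<in>N. col' x < k"
        "card {e \<in> E. e \<subseteq> N} \<le> card (multipartite_edges N col')"
      using Suc.IH[of N "{e \<in> E. e \<subseteq> N}"] Suc.prems(2) by auto
    have "card E \<le> card {e \<in> E. e \<subseteq> N} + card N * card (V - N)"
      using Suc.prems(1,2) v_max unfolding N_def
      by (intro card_edges_le_card_inside_plus_degrees) auto
    also have "\<dots> \<le> card (multipartite_edges N col') + card N * card (V - N)"
      using col'(2) by simp
    also have "\<dots> \<le> card (multipartite_edges V (\<lambda>x. if x \<in> N then col' x else k))"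
      using Suc.prems(1) \<open>N \<subseteq> V\<close> col'(1)
      by (intro card_multipartite_edges_add_class) auto
    finally show ?thesis
      using col'(1) by (intro exI[of _ "\<lambda>x. if x \<in> N then col' x else k"]) auto
  qed
qed


section \<open>The upper bound\<close>

lemma card_neighbours_le_if_unique_clique:
  assumes unique: "cliques V E r = {S}" and "x \<in> V - S" and "0 < r"
  shows "card (neighbours S E x) \<le> r - 2"
proof (rule ccontr)
  assume "\<not> card (neighbours S E x) \<le> r - 2"
  then have "r - 1 \<le> card (neighbours S E x)" by linarith
  then obtain T where T: "T \<subseteq> neighbours S E x" "card T = r - 1" "finite T"
    by (rule obtain_subset_with_card_n)
  have S: "S \<subseteq> V" "clique E S"
    using unique unfolding cliques_def by blast+
  have "T \<subseteq> S"
    using T(1) neighbours_subset by (rule order_trans)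
  then have "clique E (insert x T)"
    using T(1) clique_subset[OF S(2)] by (intro clique_insert_neighbours)
  moreover have "insert x T \<subseteq> V"
    using assms(2) \<open>T \<subseteq> S\<close> S(1) by blast
  moreover have "card (insert x T) = r"
    using T(2,3) assms(2,3) \<open>T \<subseteq> S\<close> by (auto simp: card_insert_if)
  ultimately have "insert x T \<in> cliques V E r"
    unfolding cliques_def by blast
  with unique assms(2) show False by blast
qed

lemma cliques_outside_unique_clique:
  assumes "cliques V E r = {S}" and "0 < r"
  shows "cliques (V - S) {e \<in> E. e \<subseteq> V - S} r = {}"
proof (rule ccontr)
  assume "cliques (V - S) {e \<in> E. e \<subseteq> V - S} r \<noteq> {}"
  then obtain C where C: "C \<subseteq> V - S" "card C = r" "clique {e \<in> E. e \<subseteq> V - S} C"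
    unfolding cliques_def by blast
  then have "C \<in> cliques V E r"
    unfolding cliques_def clique_def by blast
  then have "C = S"
    using assms(1) by blast
  moreover have "C \<noteq> {}"
    using C(2) assms(2) by auto
  ultimately show False
    using C(1) by blast
qed

lemma card_edges_between_le_if_unique_clique:
  assumes "finite V" and "\<forall>e\<in>E. card e = 2"
    and "cliques V E r = {S}" and "0 < r"
  shows "card (\<Union>x\<in>V - S. {e \<in> E. x \<in> e \<and> e \<subseteq> insert x S}) \<le> (r - 2) * card (V - S)"
proof -
  have "S \<subseteq> V"
    using assms(3) unfolding cliques_def by blast
  then have "finite S"
    using assms(1) by (rule finite_subset)
  have "card (\<Union>x\<in>V - S. {e \<in> E. x \<in> e \<and> e \<subseteq> insert x S})
      \<le> (\<Sum>x\<in>V - S. card {e \<in> E. x \<in> e \<and> e \<subseteq> insert x S})"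
    using assms(1) by (intro card_UN_le) simp
  also have "\<dots> \<le> (\<Sum>x\<in>V - S. r - 2)"
  proof (rule sum_mono)
    fix x assume "x \<in> V - S"
    have "card {e \<in> E. x \<in> e \<and> e \<subseteq> insert x S} \<le> card (neighbours S E x)"
      using assms(2) \<open>finite S\<close> by (rule card_edges_at_le_card_neighbours)
    also have "\<dots> \<le> r - 2"
      using assms(3) \<open>x \<in> V - S\<close> assms(4) by (rule card_neighbours_le_if_unique_clique)
    finally show "card {e \<in> E. x \<in> e \<and> e \<subseteq> insert x S} \<le> r - 2" .
  qed
  finally show ?thesis
    by (simp add: mult.commute)
qed

lemma card_edges_le_if_unique_clique:
  assumes "finite V" and edges: "\<forall>e\<in>E. card e = 2 \<and> e \<subseteq> V"
    and unique: "cliques V E r = {S}" and "2 \<le> r"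
  shows "card E \<le> (r choose 2) + (r - 2) * (card V - r) + ex (card V - r) (K_verts r) (K_edges r)"
proof -
  have "S \<subseteq> V" and "card S = r"
    using unique unfolding cliques_def by blast+
  have "finite S"
    using \<open>S \<subseteq> V\<close> assms(1) by (rule finite_subset)
  have "card (V - S) = card V - r"
    using card_Diff_subset[OF \<open>finite S\<close> \<open>S \<subseteq> V\<close>] \<open>card S = r\<close> by simp
  define U where "U = (\<Union>x\<in>V - S. {e \<in> E. x \<in> e \<and> e \<subseteq> insert x S})"
  have "E \<subseteq> {e \<in> E. e \<subseteq> S} \<union> {e \<in> E. e \<subseteq> V - S} \<union> U"
  proof
    fix e assume "e \<in> E"
    then obtain a b where "e = {a, b}" and "e \<subseteq> V"
      using edges by (auto simp: card_2_iff)
    then show "e \<in> {e \<in> E. e \<subseteq> S} \<union> {e \<in> E. e \<subseteq> V - S} \<union> U"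
      using \<open>e \<in> E\<close> unfolding U_def by auto
  qed
  moreover have "finite E"
    using edges assms(1) by (intro finite_edges) auto
  ultimately have "card E \<le> card ({e \<in> E. e \<subseteq> S} \<union> {e \<in> E. e \<subseteq> V - S} \<union> U)"
    by (intro card_mono) (auto simp: U_def intro: finite_subset[OF _ \<open>finite E\<close>])
  also have "\<dots> \<le> card {e \<in> E. e \<subseteq> S} + card {e \<in> E. e \<subseteq> V - S} + card U"
    by (meson add_right_mono card_Un_le order_trans)
  also have "card {e \<in> E. e \<subseteq> S} \<le> r choose 2"
    using card_edges_inside_le[of E S] edges \<open>finite S\<close> \<open>card S = r\<close> by simp
  also have "card {e \<in> E. e \<subseteq> V - S} \<le> ex (card V - r) (K_verts r) (K_edges r)"
    using card_le_ex[of "V - S" "{e \<in> E. e \<subseteq> V - S}" r] assms(1) edges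
      cliques_outside_unique_clique[OF unique] assms(4) \<open>card (V - S) = card V - r\<close> by simp
  also have "card U \<le> (r - 2) * (card V - r)"
    using card_edges_between_le_if_unique_clique[OF assms(1) _ unique] edges assms(4)
      \<open>card (V - S) = card V - r\<close> unfolding U_def by simp
  finally show ?thesis by simp
qed


section \<open>The extremal construction\<close>

text \<open>The old vertices are \<open>0..<m\<close>, coloured by \<open>col\<close>, and the new vertex \<open>s j\<close>
  is \<open>m + j\<close>.\<close>

definition cross_edges :: "nat \<Rightarrow> nat \<Rightarrow> (nat \<Rightarrow> nat) \<Rightarrow> nat set set" where
  "cross_edges m r col = (\<lambda>(x, j). {x, m + j}) ` (SIGMA x:{0..<m}. {0..<r - 1} - {col x})"

definition unique_clique_graph :: "nat \<Rightarrow> nat \<Rightarrow> (nat \<Rightarrow> nat) \<Rightarrow> nat set set" where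
  "unique_clique_graph m r col =
     complete_edges {m..<m + r} \<union> multipartite_edges {0..<m} col \<union> cross_edges m r col"

lemma mem_cross_edges:
  "e \<in> cross_edges m r col \<longleftrightarrow> (\<exists>x j. e = {x, m + j} \<and> x < m \<and> j < r - 1 \<and> j \<noteq> col x)"
  unfolding cross_edges_def by force

lemma card_cross_edges:
  assumes "\<forall>x<m. col x < r - 1"
  shows "card (cross_edges m r col) = m * (r - 2)"
proof -
  have "inj_on (\<lambda>(x, j). {x, m + j}) (SIGMA x:{0..<m}. {0..<r - 1} - {col x})"
    by (auto simp: inj_on_def doubleton_eq_iff)
  then have "card (cross_edges m r col) = (\<Sum>x<m. card ({0..<r - 1} - {col x}))"
    unfolding cross_edges_def by (simp add: card_image atLeast0LessThan)
  also have "\<dots> = (\<Sum>x<m. r - 2)"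
    using assms by (intro sum.cong) auto
  finally show ?thesis by simp
qed

lemma card_unique_clique_graph:
  assumes "\<forall>x<m. col x < r - 1"
  shows "card (unique_clique_graph m r col)
           = (r choose 2) + card (multipartite_edges {0..<m} col) + m * (r - 2)"
proof -
  have high: "complete_edges {m..<m + r} \<subseteq> Pow {m..<m + r}"
    unfolding complete_edges_def by blast
  have low: "multipartite_edges {0..<m} col \<subseteq> Pow {0..<m} - {{}}"
    unfolding multipartite_edges_def by blast
  have mixed: "\<not> e \<subseteq> {m..<m + r} \<and> \<not> e \<subseteq> {0..<m}" if "e \<in> cross_edges m r col" for e
    using that unfolding cross_edges_def by auto
  have "{m..<m + r} \<inter> {0..<m} = {}"
    by auto
  then have "complete_edges {m..<m + r} \<inter> multipartite_edges {0..<m} col = {}"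
    using high low by blast
  moreover have "(complete_edges {m..<m + r} \<union> multipartite_edges {0..<m} col) \<inter> cross_edges m r col = {}"
    using high low mixed by blast
  moreover have "finite (multipartite_edges {0..<m} col)" and "finite (cross_edges m r col)"
    by (simp_all add: finite_multipartite_edges cross_edges_def)
  ultimately show ?thesis
    unfolding unique_clique_graph_def
    by (simp add: card_Un_disjoint finite_complete_edges card_complete_edges card_cross_edges[OF assms])
qed

lemma simple_graph_unique_clique_graph:
  "simple_graph {0..<m + r} (unique_clique_graph m r col)"
  unfolding simple_graph_def unique_clique_graph_def complete_edges_def
    multipartite_edges_def cross_edges_def
  by (auto simp: card_insert_if)

definition unique_clique_colouring :: "nat \<Rightarrow> (nat \<Rightarrow> nat) \<Rightarrow> nat \<Rightarrow> nat" where
  "unique_clique_colouring m col y = (if y < m then col y else y - m)"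

lemma unique_clique_colouring_proper:
  assumes "{a, b} \<in> unique_clique_graph m r col" and "a \<noteq> b"
  shows "unique_clique_colouring m col a \<noteq> unique_clique_colouring m col b"
proof -
  consider "{a, b} \<in> complete_edges {m..<m + r}"
    | "{a, b} \<in> multipartite_edges {0..<m} col"
    | "{a, b} \<in> cross_edges m r col"
    using assms(1) unfolding unique_clique_graph_def by blast
  then show ?thesis
  proof cases
    case 1
    then show ?thesis
      using assms(2) by (auto simp: complete_edges_def unique_clique_colouring_def)
  next
    case 2
    then obtain x y where "{a, b} = {x, y}" "x < m" "y < m" "col x \<noteq> col y"
      unfolding multipartite_edges_def by auto
    then show ?thesis
      by (auto simp: doubleton_eq_iff unique_clique_colouring_def)
  next
    case 3
    then obtain x j where "{a, b} = {x, m + j}" "x < m" "j \<noteq> col x"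
      unfolding mem_cross_edges by blast
    then show ?thesis
      by (auto simp: doubleton_eq_iff unique_clique_colouring_def)
  qed
qed

lemma unique_clique_colouring_less_if_adjacent:
  assumes "\<forall>x<m. col x < r - 1" and "a < m" and "{a, b} \<in> unique_clique_graph m r col"
  shows "unique_clique_colouring m col b < r - 1"
proof (cases "b < m")
  case True
  with assms(1) show ?thesis
    by (simp add: unique_clique_colouring_def)
next
  case False
  with assms(2) have "{a, b} \<notin> complete_edges {m..<m + r}"
    by (auto simp: complete_edges_def)
  moreover from False have "{a, b} \<notin> multipartite_edges {0..<m} col"
    using multipartite_edges_subset_Pow by fastforce
  ultimately have "{a, b} \<in> cross_edges m r col"
    using assms(3) unfolding unique_clique_graph_def by blast
  then obtain x j where "{a, b} = {x, m + j}" "x < m" "j < r - 1"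
    unfolding mem_cross_edges by blast
  with False have "b = m + j"
    by (auto simp: doubleton_eq_iff)
  with \<open>j < r - 1\<close> show ?thesis
    by (simp add: unique_clique_colouring_def)
qed

lemma card_clique_le_if_low_vertex:
  assumes col: "\<forall>x<m. col x < r - 1" and clique: "clique (unique_clique_graph m r col) C"
    and "a \<in> C" and "a < m"
  shows "card C \<le> r - 1"
proof -
  have "unique_clique_colouring m col ` C \<subseteq> {0..<r - 1}"
  proof
    fix c assume "c \<in> unique_clique_colouring m col ` C"
    then obtain y where "y \<in> C" and "c = unique_clique_colouring m col y"
      by blast
    moreover have "unique_clique_colouring m col y < r - 1"
    proof (cases "y = a")
      case True
      with \<open>a < m\<close> col show ?thesis
        by (simp add: unique_clique_colouring_def)
    next
      case False
      with clique \<open>a \<in> C\<close> \<open>y \<in> C\<close> have "{a, y} \<in> unique_clique_graph m r col"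
        by (intro clique_edge) auto
      with col \<open>a < m\<close> show ?thesis
        by (rule unique_clique_colouring_less_if_adjacent)
    qed
    ultimately show "c \<in> {0..<r - 1}" by simp
  qed
  moreover have "inj_on (unique_clique_colouring m col) C"
  proof (rule inj_onI, rule ccontr)
    fix x y
    assume "x \<in> C" "y \<in> C" "x \<noteq> y"
    with clique have "{x, y} \<in> unique_clique_graph m r col"
      by (intro clique_edge)
    then show "unique_clique_colouring m col x = unique_clique_colouring m col y \<Longrightarrow> False"
      using \<open>x \<noteq> y\<close> unique_clique_colouring_proper by blast
  qed
  ultimately show ?thesis
    using card_inj_on_le[of _ C "{0..<r - 1}"] by simp
qed

lemma cliques_unique_clique_graph:
  assumes col: "\<forall>x<m. col x < r - 1"
  shows "cliques {0..<m + r} (unique_clique_graph m r col) r = {{m..<m + r}}"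
proof (intro equalityI subsetI)
  fix C assume "C \<in> cliques {0..<m + r} (unique_clique_graph m r col) r"
  then have C: "C \<subseteq> {0..<m + r}" "card C = r" "clique (unique_clique_graph m r col) C"
    unfolding cliques_def by blast+
  show "C \<in> {{m..<m + r}}"
  proof (cases "C \<subseteq> {m..<m + r}")
    case True
    then show ?thesis
      using card_subset_eq[OF finite_atLeastLessThan True] C(2) by simp
  next
    case False
    then obtain a where "a \<in> C" and "a \<notin> {m..<m + r}"
      by blast
    with C(1) have "a < m"
      by auto
    with col C(3) \<open>a \<in> C\<close> have "card C \<le> r - 1"
      by (rule card_clique_le_if_low_vertex)
    moreover have "card C \<noteq> 0"
      using \<open>a \<in> C\<close> finite_subset[OF C(1) finite_atLeastLessThan] by auto
    ultimately show ?thesis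
      using C(2) by simp
  qed
next
  fix C assume "C \<in> {{m..<m + r}}"
  moreover have "clique (unique_clique_graph m r col) {m..<m + r}"
    unfolding clique_iff_complete_edges_subset unique_clique_graph_def by blast
  ultimately show "C \<in> cliques {0..<m + r} (unique_clique_graph m r col) r"
    unfolding cliques_def by auto
qed

lemma exists_unique_clique_graph:
  assumes "2 \<le> r"
  obtains H where "simple_graph {0..<m + r} H"
    and "cliques {0..<m + r} H r = {{m..<m + r}}"
    and "(r choose 2) + (r - 2) * m + ex m (K_verts r) (K_edges r) \<le> card H"
proof -
  obtain G where G: "simple_graph {0..<m} G" "cliques {0..<m} G r = {}"
    "card G = ex m (K_verts r) (K_edges r)"
    using ex_attained[OF assms] .
  have "\<forall>e\<in>G. card e = 2 \<and> e \<subseteq> {0..<m}"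
    using G(1) by (simp add: simple_graph_def)
  moreover have "\<forall>C\<subseteq>{0..<m}. clique G C \<longrightarrow> card C \<le> r - 1"
  proof (intro allI impI)
    fix C assume "C \<subseteq> {0..<m}" and "clique G C"
    with G(2) have "card C < r"
      by (rule card_clique_less)
    then show "card C \<le> r - 1" by simp
  qed
  ultimately have "\<exists>col. (\<forall>x\<in>{0..<m}. col x < r - 1)
      \<and> card G \<le> card (multipartite_edges {0..<m} col)"
    by (rule card_le_multipartite_edges_if_clique_bounded[OF finite_atLeastLessThan])
  then obtain col where col: "\<forall>x\<in>{0..<m}. col x < r - 1"
    "card G \<le> card (multipartite_edges {0..<m} col)"
    by blast
  then have "\<forall>x<m. col x < r - 1" by simp
  show ?thesis
  proof (rule that)
    show "simple_graph {0..<m + r} (unique_clique_graph m r col)"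
      by (rule simple_graph_unique_clique_graph)
    show "cliques {0..<m + r} (unique_clique_graph m r col) r = {{m..<m + r}}"
      using \<open>\<forall>x<m. col x < r - 1\<close> by (rule cliques_unique_clique_graph)
    show "(r choose 2) + (r - 2) * m + ex m (K_verts r) (K_edges r)
        \<le> card (unique_clique_graph m r col)"
      using card_unique_clique_graph[OF \<open>\<forall>x<m. col x < r - 1\<close>] G(3) col(2) by simp
  qed
qed

theorem theorem1p4:
  fixes r n :: nat
  assumes "r \<ge> 2" and "n \<ge> r"
  shows "exa 1 n (K_verts r) (K_edges r)
           = (r choose 2) + (r - 2) * (n - r) + ex (n - r) (K_verts r) (K_edges r)"
proof -
  let ?bound = "(r choose 2) + (r - 2) * (n - r) + ex (n - r) (K_verts r) (K_edges r)"
  let ?S = "{card E | E. simple_graph {0..<n} E \<and> card (cliques {0..<n} E r) = 1}"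
  have n: "n = (n - r) + r"
    using assms(2) by simp
  obtain H where "simple_graph {0..<n} H" and "cliques {0..<n} H r = {{n - r..<n}}"
    and "?bound \<le> card H"
    using exists_unique_clique_graph[OF assms(1), of "n - r"] n by metis
  then have "card H \<in> ?S" by auto
  moreover have upper: "k \<le> ?bound" if "k \<in> ?S" for k
  proof -
    obtain E S where "k = card E" and "simple_graph {0..<n} E" and "cliques {0..<n} E r = {S}"
      using \<open>k \<in> ?S\<close> by (auto simp: card_1_singleton_iff)
    then show ?thesis
      using card_edges_le_if_unique_clique[of "{0..<n}" E r S] assms(1)
      unfolding simple_graph_def by simp
  qed
  ultimately have "card H = ?bound"
    using \<open>?bound \<le> card H\<close> by (simp add: antisym)
  with \<open>card H \<in> ?S\<close> upper show ?thesis
    unfolding exa_complete_graph by (intro Max_eqI finite_card_graphs) auto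
qed

end
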